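(* Let $\omega$ be a weight on a countable group $G$, and let $\mu$ be a probability measure on $G$ with $\mu\in\ell^{q_0}(G,\omega_{p_0})$, where $1<q_0\le p_0<\infty$ and $\frac1{p_0}+\frac1{q_0}=1$. (i) The map $[p_0,\infty)\to\mathbb{R}$, $p\mapsto-p\log\|\mu\|_{q,\omega_p}$, where $\frac1p+\frac1q=1$, is increasing. (ii) If in addition $\mu$ has finite Shannon entropy and finite $\log\omega$-moment, then \[ H_\omega(G,\mu)=\lim_{p\to\infty}-p\log\|\mu\|_{q,\omega_p},\qquad\frac1p+\frac1q=1. \]
   Context: A weight on $G$ is $\omega:G\to[a,\infty)$, $a>0$, with $\omega(st)\le C\omega(s)\omega(t)$ for some $C>0$. For $p\ge1$, $\omega_p=\omega^{1/p}$. For a weight $\sigma$ and $1\le q<\infty$, $\ell^q(G,\sigma)=\{f:\|f\|_{q,\sigma}<\infty\}$ with $\|f\|_{q,\sigma}=\big(\sum_s|f(s)|^q\sigma(s)^q\big)^{1/q}$. Shannon entropy $H(G,\mu)=-\sum_s\mu(s)\log\mu(s)$; finite $\log\omega$-moment means $\sum_s\mu(s)\log\omega(s)<\infty$. The weighted Shannon entropy is $H_\omega(G,\mu)=-\sum_s\mu(s)\log[\mu(s)\omega(s)]$. *)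

theory Defs
  imports "HOL-Analysis.Analysis" "HOL-Algebra.Group"
begin

definition is_weight :: "('g, 'b) monoid_scheme \<Rightarrow> ('g \<Rightarrow> real) \<Rightarrow> bool" where
  "is_weight G \<omega> \<longleftrightarrow>
     (\<exists>a>0. \<forall>s\<in>carrier G. a \<le> \<omega> s) \<and>
     (\<exists>C>0. \<forall>s\<in>carrier G. \<forall>t\<in>carrier G. \<omega> (s \<otimes>\<^bsub>G\<^esub> t) \<le> C * \<omega> s * \<omega> t)"

definition weight_root :: "('g \<Rightarrow> real) \<Rightarrow> real \<Rightarrow> 'g \<Rightarrow> real" where
  "weight_root \<omega> p = (\<lambda>s. \<omega> s powr (1 / p))"

definition in_lq :: "('g, 'b) monoid_scheme \<Rightarrow> real \<Rightarrow> ('g \<Rightarrow> real) \<Rightarrow> ('g \<Rightarrow> real) \<Rightarrow> bool" where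
  "in_lq G q \<sigma> f \<longleftrightarrow> (\<lambda>s. \<bar>f s\<bar> powr q * \<sigma> s powr q) summable_on carrier G"

definition wnorm :: "('g, 'b) monoid_scheme \<Rightarrow> real \<Rightarrow> ('g \<Rightarrow> real) \<Rightarrow> ('g \<Rightarrow> real) \<Rightarrow> real" where
  "wnorm G q \<sigma> f = (\<Sum>\<^sub>\<infinity>s\<in>carrier G. \<bar>f s\<bar> powr q * \<sigma> s powr q) powr (1 / q)"

definition conj_exp :: "real \<Rightarrow> real" where
  "conj_exp p = p / (p - 1)"

definition is_prob :: "('g, 'b) monoid_scheme \<Rightarrow> ('g \<Rightarrow> real) \<Rightarrow> bool" where
  "is_prob G \<mu> \<longleftrightarrow> (\<forall>s\<in>carrier G. 0 \<le> \<mu> s) \<and> (\<mu> has_sum 1) (carrier G)"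

text \<open>Finite Shannon entropy (convention 0 log 0 = 0, which matches ln 0 = 0).\<close>
definition finite_entropy :: "('g, 'b) monoid_scheme \<Rightarrow> ('g \<Rightarrow> real) \<Rightarrow> bool" where
  "finite_entropy G \<mu> \<longleftrightarrow> (\<lambda>s. - \<mu> s * ln (\<mu> s)) summable_on carrier G"

definition finite_log_moment :: "('g, 'b) monoid_scheme \<Rightarrow> ('g \<Rightarrow> real) \<Rightarrow> ('g \<Rightarrow> real) \<Rightarrow> bool" where
  "finite_log_moment G \<omega> \<mu> \<longleftrightarrow> (\<lambda>s. \<mu> s * ln (\<omega> s)) summable_on carrier G"

definition weighted_entropy :: "('g, 'b) monoid_scheme \<Rightarrow> ('g \<Rightarrow> real) \<Rightarrow> ('g \<Rightarrow> real) \<Rightarrow> real" where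
  "weighted_entropy G \<omega> \<mu> = - (\<Sum>\<^sub>\<infinity>s\<in>carrier G. \<mu> s * ln (\<mu> s * \<omega> s))"

end

theory Submission
  imports Defs
begin

text \<open>Put r = 1/(p - 1) = q - 1 and Y = \<mu> \<omega>. The q-th power of the weighted norm
  N(p) = \<parallel>\<mu>\<parallel>_{q,\<omega>_p} is the r-th moment E[Y^r] = \<Sum>_s \<mu>(s) Y(s)^r of Y under \<mu>, hence
  -p log N(p) = -(1/r) log E[Y^r] = -log \<parallel>Y\<parallel>_{L^r(\<mu>)}. By Lyapunov's inequality \<parallel>Y\<parallel>_{L^r(\<mu>)}
  increases with r, and r decreases as p grows: this is (i). As r \<rightarrow> 0+,
  (E[Y^r] - 1)/r \<rightarrow> E[log Y] by dominated convergence, because (y^r - 1)/r decreases to log y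
  as r decreases to 0; hence log \<parallel>Y\<parallel>_{L^r(\<mu>)} \<rightarrow> E[log Y] = -H_\<omega>(G,\<mu>), which is (ii).\<close>

lemma powr_le_1_plus_mult:
  fixes z l :: real
  assumes "0 \<le> z" "0 \<le> l" "l \<le> 1"
  shows "z powr l \<le> 1 + l * (z - 1)"
proof (cases "z = 0")
  case False
  then have "z powr l * 1 powr (1 - l) \<le> l * z + (1 - l) * 1"
    using assms by (intro Youngs_inequality_0) auto
  then show ?thesis by (simp add: algebra_simps)
qed (use assms in auto)

lemma powr_diff_quotient_mono:
  fixes y r r' :: real
  assumes "0 \<le> y" "0 < r" "r \<le> r'"
  shows "(y powr r - 1) / r \<le> (y powr r' - 1) / r'"
proof -
  have "y powr r = (y powr r') powr (r / r')"
    using assms by (simp add: powr_powr)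
  also have "\<dots> \<le> 1 + (r / r') * (y powr r' - 1)"
    using assms by (intro powr_le_1_plus_mult) auto
  finally show ?thesis
    using assms by (simp add: field_simps)
qed

lemma ln_le_powr_diff_quotient:
  fixes y r :: real
  assumes "0 < y" "0 < r"
  shows "ln y \<le> (y powr r - 1) / r"
proof -
  have "1 + r * ln y \<le> exp (r * ln y)" by (rule exp_ge_add_one_self)
  then show ?thesis
    using assms by (simp add: powr_def field_simps)
qed

lemma powr_diff_quotient_tendsto:
  fixes y :: real
  assumes "0 < y"
  shows "((\<lambda>r. (y powr r - 1) / r) \<longlongrightarrow> ln y) (at_right 0)"
proof -
  have "((\<lambda>r. exp (r * ln y)) has_field_derivative ln y) (at 0 within {0<..})"
    by (auto intro!: derivative_eq_intros)
  then have "((\<lambda>r. (exp (r * ln y) - 1) / r) \<longlongrightarrow> ln y) (at_right 0)"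
    by (simp add: has_field_derivative_iff)
  then show ?thesis
    using assms by (simp add: powr_def)
qed

lemma ln_div_tendsto_of_diff_quotient_tendsto:
  fixes h :: "real \<Rightarrow> real"
  assumes lim: "((\<lambda>r. (h r - 1) / r) \<longlongrightarrow> L) (at_right 0)"
    and pos: "\<forall>\<^sub>F r in at_right 0. 0 < h r"
  shows "((\<lambda>r. ln (h r) / r) \<longlongrightarrow> L) (at_right 0)"
proof (rule tendsto_sandwich)
  have "((\<lambda>r. 1 + r * ((h r - 1) / r)) \<longlongrightarrow> 1 + 0 * L) (at_right 0)"
    by (intro tendsto_intros lim tendsto_ident_at)
  then have "((\<lambda>r. (h r - 1) / r / (1 + r * ((h r - 1) / r))) \<longlongrightarrow> L / (1 + 0 * L)) (at_right 0)"
    by (intro tendsto_intros lim) auto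
  moreover have "\<forall>\<^sub>F r in at_right 0. (h r - 1) / r / (1 + r * ((h r - 1) / r)) = (h r - 1) / r / h r"
    using eventually_at_right_less by eventually_elim simp
  ultimately show "((\<lambda>r. (h r - 1) / r / h r) \<longlongrightarrow> L) (at_right 0)"
    by (auto elim: Lim_transform_eventually)
  show "((\<lambda>r. (h r - 1) / r) \<longlongrightarrow> L) (at_right 0)" by (rule lim)
  show "\<forall>\<^sub>F r in at_right 0. (h r - 1) / r / h r \<le> ln (h r) / r"
    using pos eventually_at_right_less
  proof eventually_elim
    case (elim r)
    have "ln (1 / h r) \<le> 1 / h r - 1" using elim by (intro ln_le_minus_one) simp
    then have "(h r - 1) / h r \<le> ln (h r)" using elim by (simp add: ln_div field_simps)
    then have "(h r - 1) / h r / r \<le> ln (h r) / r" using elim by (intro divide_right_mono) auto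
    then show ?case by (simp add: ac_simps)
  qed
  show "\<forall>\<^sub>F r in at_right 0. ln (h r) / r \<le> (h r - 1) / r"
    using pos eventually_at_right_less
    by eventually_elim (simp add: divide_right_mono ln_le_minus_one)
qed

lemma infsum_tendsto_0_dominated:
  fixes f :: "'b \<Rightarrow> 'a \<Rightarrow> real"
  assumes g: "g summable_on A"
    and dom: "\<forall>\<^sub>F x in F. \<forall>s\<in>A. 0 \<le> f x s \<and> f x s \<le> g s"
    and lim: "\<And>s. s \<in> A \<Longrightarrow> ((\<lambda>x. f x s) \<longlongrightarrow> 0) F"
  shows "((\<lambda>x. infsum (f x) A) \<longlongrightarrow> 0) F"
proof (rule tendstoI)
  fix e :: real assume e: "0 < e"
  have "\<forall>\<^sub>F B in finite_subsets_at_top A. dist (sum g B) (infsum g A) < e / 2"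
    using infsum_tendsto[OF g] by (rule tendstoD) (use e in simp)
  then obtain B where B: "finite B" "B \<subseteq> A" and "dist (sum g B) (infsum g A) < e / 2"
    unfolding eventually_finite_subsets_at_top by blast
  then have tail: "infsum g A - sum g B < e / 2"
    unfolding dist_real_def by linarith
  have "((\<lambda>x. \<Sum>s\<in>B. f x s) \<longlongrightarrow> (\<Sum>s\<in>B. 0)) F"
    using B by (intro tendsto_sum lim) auto
  then have head: "\<forall>\<^sub>F x in F. (\<Sum>s\<in>B. f x s) < e / 2"
    by (rule order_tendstoD(2)) (use e in simp)
  show "\<forall>\<^sub>F x in F. dist (infsum (f x) A) 0 < e"
    using dom head
  proof eventually_elim
    case (elim x)
    then have fx: "f x summable_on A"
      by (intro summable_on_comparison_test[OF g]) auto
    have fB: "f x summable_on B" and gB: "g summable_on B"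
      using B(1) by (auto intro: summable_on_finite)
    have "infsum (f x) A = sum (f x) B + infsum (f x) (A - B)"
      using infsum_Diff[OF fx fB B(2)] B(1) by simp
    also have "infsum (f x) (A - B) \<le> infsum g (A - B)"
      using elim by (intro infsum_mono summable_on_Diff fx g fB gB B(2)) auto
    also have "infsum g (A - B) = infsum g A - sum g B"
      using infsum_Diff[OF g gB B(2)] B(1) by simp
    finally have "infsum (f x) A < e"
      using elim tail by linarith
    moreover have "0 \<le> infsum (f x) A"
      using elim by (intro infsum_nonneg) auto
    ultimately show ?case by simp
  qed
qed

locale finite_moment =
  fixes A :: "'a set" and \<mu> Y :: "'a \<Rightarrow> real" and r0 :: real
  assumes mass_nonneg: "\<And>s. s \<in> A \<Longrightarrow> 0 \<le> \<mu> s"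
    and mass_has_sum: "(\<mu> has_sum 1) A"
    and Y_nonneg: "\<And>s. s \<in> A \<Longrightarrow> 0 \<le> Y s"
    and Y_pos: "\<And>s. s \<in> A \<Longrightarrow> 0 < \<mu> s \<Longrightarrow> 0 < Y s"
    and r0_pos: "0 < r0"
    and summable_r0: "(\<lambda>s. \<mu> s * Y s powr r0) summable_on A"
begin

definition moment :: "real \<Rightarrow> real" where
  "moment r = (\<Sum>\<^sub>\<infinity>s\<in>A. \<mu> s * Y s powr r)"

lemma summable_mass: "\<mu> summable_on A"
  using mass_has_sum by (rule has_sum_imp_summable)

lemma summable_moment:
  assumes "0 < r" "r \<le> r0"
  shows "(\<lambda>s. \<mu> s * Y s powr r) summable_on A"
proof (rule summable_on_comparison_test)
  show "(\<lambda>s. \<mu> s + \<mu> s * Y s powr r0) summable_on A"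
    using summable_mass summable_r0 by (rule summable_on_add)
  fix s assume s: "s \<in> A"
  have "Y s powr r \<le> 1 + Y s powr r0"
  proof (cases "Y s \<le> 1")
    case True
    then have "Y s powr r \<le> 1" using Y_nonneg[OF s] assms by (simp add: powr_le1)
    then show ?thesis by (smt (verit) powr_ge_zero)
  next
    case False
    then have "Y s powr r \<le> Y s powr r0" using assms by (intro powr_mono) auto
    then show ?thesis by simp
  qed
  then show "\<mu> s * Y s powr r \<le> \<mu> s + \<mu> s * Y s powr r0"
    using mass_nonneg[OF s] by (metis distrib_left mult.right_neutral mult_left_mono)
  show "0 \<le> \<mu> s * Y s powr r" using mass_nonneg[OF s] by simp
qed

lemma moment_pos:
  assumes "0 < r" "r \<le> r0"
  shows "0 < moment r"
proof -
  obtain s where s: "s \<in> A" "0 < \<mu> s"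
  proof (rule ccontr)
    assume "\<not> thesis"
    then have "\<And>s. s \<in> A \<Longrightarrow> \<mu> s = 0" using mass_nonneg that by force
    then have "(\<mu> has_sum 0) A" by (rule has_sum_0)
    then show False using mass_has_sum has_sum_unique by fastforce
  qed
  have "0 < \<mu> s * Y s powr r"
    using s Y_pos[OF s] by simp
  also have "\<dots> = (\<Sum>\<^sub>\<infinity>t\<in>{s}. \<mu> t * Y t powr r)" by simp
  also have "\<dots> \<le> moment r"
    unfolding moment_def using s mass_nonneg summable_moment[OF assms]
    by (intro infsum_mono_neutral) auto
  finally show ?thesis .
qed

text \<open>With l = r2/r1, pointwise Y^r2 = (Y^r1)^l lies below the tangent
  line of the concave map t \<mapsto> t^l at t = moment r1; averaging that tangent line against \<mu>
  gives exactly (moment r1)^l.\<close>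
lemma moment_le_powr:
  assumes "0 < r2" "r2 \<le> r1" "r1 \<le> r0"
  shows "moment r2 \<le> moment r1 powr (r2 / r1)"
proof -
  define M l where "M = moment r1" and "l = r2 / r1"
  have M: "0 < M" unfolding M_def using assms by (intro moment_pos) auto
  have l: "0 < l" "l \<le> 1" using assms by (auto simp: l_def)
  define c1 c2 where "c1 = M powr l * (1 - l)" and "c2 = M powr l * l / M"
  have tangent: "\<mu> s * Y s powr r2 \<le> c1 * \<mu> s + c2 * (\<mu> s * Y s powr r1)"
    if s: "s \<in> A" for s
  proof -
    have "Y s powr r2 = M powr l * (Y s powr r1 / M) powr l"
      using M assms Y_nonneg[OF s] by (simp add: l_def powr_powr powr_divide)
    also have "\<dots> \<le> M powr l * (1 + l * (Y s powr r1 / M - 1))"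
      using M l by (intro mult_left_mono powr_le_1_plus_mult) auto
    also have "\<dots> = c1 + c2 * Y s powr r1"
      using M by (simp add: c1_def c2_def field_simps)
    finally have "\<mu> s * Y s powr r2 \<le> \<mu> s * (c1 + c2 * Y s powr r1)"
      using mass_nonneg[OF s] by (intro mult_left_mono)
    then show ?thesis by (simp add: algebra_simps)
  qed
  have "moment r2 \<le> (\<Sum>\<^sub>\<infinity>s\<in>A. c1 * \<mu> s + c2 * (\<mu> s * Y s powr r1))"
    unfolding moment_def using tangent assms
    by (intro infsum_mono summable_on_add summable_on_cmult_right summable_mass summable_moment) auto
  also have "\<dots> = c1 * infsum \<mu> A + c2 * M"
    using summable_moment[of r1] summable_mass assms unfolding M_def moment_def
    by (subst infsum_add) (auto intro: summable_on_cmult_right simp: infsum_cmult_right)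
  also have "\<dots> = M powr l"
    using M infsumI[OF mass_has_sum] by (simp add: c1_def c2_def field_simps)
  finally show ?thesis by (simp add: M_def l_def)
qed

lemma ln_moment_div_mono:
  assumes "0 < r2" "r2 \<le> r1" "r1 \<le> r0"
  shows "ln (moment r2) / r2 \<le> ln (moment r1) / r1"
proof -
  have pos: "0 < moment r2" "0 < moment r1"
    using assms by (auto intro: moment_pos)
  have "ln (moment r2) \<le> ln (moment r1 powr (r2 / r1))"
    using moment_le_powr[OF assms] pos by (subst ln_le_cancel_iff) auto
  also have "\<dots> = r2 / r1 * ln (moment r1)"
    using pos by (simp add: ln_powr)
  finally have "ln (moment r2) / r2 \<le> r2 / r1 * ln (moment r1) / r2"
    using assms by (intro divide_right_mono) auto
  then show ?thesis
    using assms by simp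
qed

definition quotient_gap :: "real \<Rightarrow> 'a \<Rightarrow> real" where
  "quotient_gap r s = \<mu> s * ((Y s powr r - 1) / r - ln (Y s))"

lemma quotient_gap_nonneg:
  assumes s: "s \<in> A" and r: "0 < r"
  shows "0 \<le> quotient_gap r s"
proof (cases "\<mu> s = 0")
  case False
  then have "0 < \<mu> s" "0 < Y s" using mass_nonneg[OF s] Y_pos[OF s] by auto
  then show ?thesis
    using ln_le_powr_diff_quotient[OF _ r] by (simp add: quotient_gap_def)
qed (simp add: quotient_gap_def)

lemma quotient_gap_le:
  assumes "s \<in> A" "0 < r" "r \<le> r0"
  shows "quotient_gap r s \<le> quotient_gap r0 s"
  unfolding quotient_gap_def using mass_nonneg Y_nonneg assms
  by (intro mult_left_mono diff_right_mono powr_diff_quotient_mono) auto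

lemma quotient_gap_tendsto_0:
  assumes s: "s \<in> A"
  shows "((\<lambda>r. quotient_gap r s) \<longlongrightarrow> 0) (at_right 0)"
proof (cases "\<mu> s = 0")
  case False
  then have "0 < Y s" using mass_nonneg[OF s] Y_pos[OF s] by auto
  then have "((\<lambda>r. quotient_gap r s) \<longlongrightarrow> \<mu> s * (ln (Y s) - ln (Y s))) (at_right 0)"
    unfolding quotient_gap_def by (intro tendsto_intros powr_diff_quotient_tendsto)
  then show ?thesis by simp
qed (simp add: quotient_gap_def)

context
  assumes summable_ln: "(\<lambda>s. \<mu> s * ln (Y s)) summable_on A"
begin

lemma has_sum_quotient_gap:
  assumes r: "0 < r" "r \<le> r0"
  shows "(quotient_gap r has_sum ((moment r - 1) / r - (\<Sum>\<^sub>\<infinity>s\<in>A. \<mu> s * ln (Y s)))) A"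
proof -
  have "((\<lambda>s. (1 / r) * (\<mu> s * Y s powr r) + (- (1 / r)) * \<mu> s + - (\<mu> s * ln (Y s)))
         has_sum ((1 / r) * moment r + (- (1 / r)) * 1 + - (\<Sum>\<^sub>\<infinity>s\<in>A. \<mu> s * ln (Y s)))) A"
    unfolding moment_def
    by (intro has_sum_add has_sum_cmult_right has_sum_uminusI has_sum_infsum
        summable_moment r summable_ln mass_has_sum)
  moreover have "(1 / r) * (\<mu> s * Y s powr r) + (- (1 / r)) * \<mu> s + - (\<mu> s * ln (Y s))
      = quotient_gap r s" for s
    using r by (simp add: quotient_gap_def field_simps)
  ultimately show ?thesis
    using r by (simp add: diff_divide_distrib)
qed

lemma moment_diff_quotient_tendsto:
  "((\<lambda>r. (moment r - 1) / r) \<longlongrightarrow> (\<Sum>\<^sub>\<infinity>s\<in>A. \<mu> s * ln (Y s))) (at_right 0)"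
proof -
  define L where "L = (\<Sum>\<^sub>\<infinity>s\<in>A. \<mu> s * ln (Y s))"
  have "((\<lambda>r. infsum (quotient_gap r) A) \<longlongrightarrow> 0) (at_right 0)"
  proof (rule infsum_tendsto_0_dominated)
    show "quotient_gap r0 summable_on A"
      using has_sum_quotient_gap r0_pos by (auto intro: has_sum_imp_summable)
    show "\<forall>\<^sub>F r in at_right 0. \<forall>s\<in>A. 0 \<le> quotient_gap r s \<and> quotient_gap r s \<le> quotient_gap r0 s"
      using eventually_at_right_real[OF r0_pos]
      by eventually_elim (auto intro: quotient_gap_nonneg quotient_gap_le)
  qed (rule quotient_gap_tendsto_0)
  then have "((\<lambda>r. infsum (quotient_gap r) A + L) \<longlongrightarrow> 0 + L) (at_right 0)"
    by (intro tendsto_add tendsto_const)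
  moreover have "\<forall>\<^sub>F r in at_right 0. infsum (quotient_gap r) A + L = (moment r - 1) / r"
    using eventually_at_right_real[OF r0_pos]
    by eventually_elim (simp add: infsumI[OF has_sum_quotient_gap] L_def)
  ultimately show ?thesis
    unfolding L_def by (auto elim: Lim_transform_eventually)
qed

lemma ln_moment_div_tendsto:
  "((\<lambda>r. ln (moment r) / r) \<longlongrightarrow> (\<Sum>\<^sub>\<infinity>s\<in>A. \<mu> s * ln (Y s))) (at_right 0)"
proof (rule ln_div_tendsto_of_diff_quotient_tendsto)
  show "((\<lambda>r. (moment r - 1) / r) \<longlongrightarrow> (\<Sum>\<^sub>\<infinity>s\<in>A. \<mu> s * ln (Y s))) (at_right 0)"
    by (rule moment_diff_quotient_tendsto)
  show "\<forall>\<^sub>F r in at_right 0. 0 < moment r"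
    using eventually_at_right_real[OF r0_pos] by eventually_elim (simp add: moment_pos)
qed

end

end

lemma powr_conj_exp_summand:
  fixes m w p :: real
  assumes "1 < p" "0 \<le> m" "0 < w"
  shows "\<bar>m\<bar> powr conj_exp p * (w powr (1 / p)) powr conj_exp p = m * (m * w) powr (1 / (p - 1))"
proof (cases "m = 0")
  case True
  then show ?thesis using assms by (simp add: conj_exp_def)
next
  case False
  have q: "conj_exp p = 1 + 1 / (p - 1)" and q_div_p: "conj_exp p / p = 1 / (p - 1)"
    using assms by (simp_all add: conj_exp_def field_simps)
  have "\<bar>m\<bar> powr conj_exp p = m * m powr (1 / (p - 1))"
    using False assms by (simp add: q powr_add)
  moreover have "(w powr (1 / p)) powr conj_exp p = w powr (1 / (p - 1))"
    using assms by (simp add: powr_powr q_div_p)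
  ultimately show ?thesis
    using assms by (simp add: powr_mult)
qed

lemma filterlim_one_div_pred_at_right_0: "filterlim (\<lambda>p::real. 1 / (p - 1)) (at_right 0) at_top"
proof -
  have "filterlim (\<lambda>p::real. p - 1) at_top at_top"
    by (rule filterlim_tendsto_add_at_top[OF tendsto_const filterlim_ident, of "-1", simplified])
  from filterlim_compose[OF filterlim_inverse_at_right_top this] show ?thesis
    by (simp add: inverse_eq_divide)
qed

context
  fixes G :: "('g, 'b) monoid_scheme" and \<omega> \<mu> :: "'g \<Rightarrow> real"
  assumes mass_nonneg: "\<And>s. s \<in> carrier G \<Longrightarrow> 0 \<le> \<mu> s"
    and weight_pos: "\<And>s. s \<in> carrier G \<Longrightarrow> 0 < \<omega> s"
begin

lemma weight_root_summand_conj_exp: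
  "1 < p \<Longrightarrow> s \<in> carrier G \<Longrightarrow>
    \<bar>\<mu> s\<bar> powr conj_exp p * weight_root \<omega> p s powr conj_exp p = \<mu> s * (\<mu> s * \<omega> s) powr (1 / (p - 1))"
  unfolding weight_root_def by (intro powr_conj_exp_summand mass_nonneg weight_pos)

lemma in_lq_conj_exp_iff:
  assumes "1 < p"
  shows "in_lq G (conj_exp p) (weight_root \<omega> p) \<mu> \<longleftrightarrow>
    (\<lambda>s. \<mu> s * (\<mu> s * \<omega> s) powr (1 / (p - 1))) summable_on carrier G"
  unfolding in_lq_def by (intro summable_on_cong weight_root_summand_conj_exp assms)

lemma neg_mult_ln_wnorm_conj_exp:
  assumes p: "1 < p"
  shows "- p * ln (wnorm G (conj_exp p) (weight_root \<omega> p) \<mu>)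
    = - (ln (\<Sum>\<^sub>\<infinity>s\<in>carrier G. \<mu> s * (\<mu> s * \<omega> s) powr (1 / (p - 1))) / (1 / (p - 1)))"
proof -
  define M where "M = (\<Sum>\<^sub>\<infinity>s\<in>carrier G. \<mu> s * (\<mu> s * \<omega> s) powr (1 / (p - 1)))"
  have "wnorm G (conj_exp p) (weight_root \<omega> p) \<mu> = M powr (1 / conj_exp p)"
    unfolding wnorm_def M_def
    by (intro arg_cong[where f = "\<lambda>x. x powr (1 / conj_exp p)"] infsum_cong
        weight_root_summand_conj_exp p)
  moreover have "ln (M powr (1 / conj_exp p)) = (1 / conj_exp p) * ln M"
    by (cases "M = 0") (simp_all add: ln_powr)
  moreover have "p * (1 / conj_exp p) = p - 1"
    using p by (simp add: conj_exp_def)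
  ultimately have "- p * ln (wnorm G (conj_exp p) (weight_root \<omega> p) \<mu>) = - (p - 1) * ln M"
    by (metis minus_mult_left mult.assoc)
  then show ?thesis
    by (simp add: M_def algebra_simps)
qed

lemma summable_mass_ln_mass_weight:
  assumes "finite_entropy G \<mu>" "finite_log_moment G \<omega> \<mu>"
  shows "(\<lambda>s. \<mu> s * ln (\<mu> s * \<omega> s)) summable_on carrier G"
proof -
  have "(\<lambda>s. - (- \<mu> s * ln (\<mu> s)) + \<mu> s * ln (\<omega> s)) summable_on carrier G"
    using assms unfolding finite_entropy_def finite_log_moment_def
    by (intro summable_on_add summable_on_uminus[THEN iffD2])
  moreover have "- (- \<mu> s * ln (\<mu> s)) + \<mu> s * ln (\<omega> s) = \<mu> s * ln (\<mu> s * \<omega> s)"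
    if "s \<in> carrier G" for s
    using mass_nonneg[OF that] weight_pos[OF that]
    by (cases "\<mu> s = 0") (auto simp: ln_mult algebra_simps)
  ultimately show ?thesis
    by (simp cong: summable_on_cong)
qed

context
  fixes p0 :: real
  assumes mass_has_sum: "(\<mu> has_sum 1) (carrier G)"
    and p0: "1 < p0"
    and in_lq_p0: "in_lq G (conj_exp p0) (weight_root \<omega> p0) \<mu>"
begin

interpretation finite_moment "carrier G" \<mu> "\<lambda>s. \<mu> s * \<omega> s" "1 / (p0 - 1)"
proof
  show "(\<lambda>s. \<mu> s * (\<mu> s * \<omega> s) powr (1 / (p0 - 1))) summable_on carrier G"
    using in_lq_p0 in_lq_conj_exp_iff[OF p0] by simp
qed (use mass_nonneg mass_has_sum weight_pos p0 in \<open>auto intro: mult_nonneg_nonneg less_imp_le\<close>)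

lemma neg_mult_ln_wnorm_eq_moment:
  "1 < p \<Longrightarrow> - p * ln (wnorm G (conj_exp p) (weight_root \<omega> p) \<mu>)
    = - (ln (moment (1 / (p - 1))) / (1 / (p - 1)))"
  unfolding moment_def by (rule neg_mult_ln_wnorm_conj_exp)

lemma mono_on_neg_mult_ln_wnorm:
  "mono_on {p0..} (\<lambda>p. - p * ln (wnorm G (conj_exp p) (weight_root \<omega> p) \<mu>))"
proof (rule mono_onI)
  fix x y assume xy: "x \<in> {p0..}" "y \<in> {p0..}" "x \<le> y"
  then have "1 < x" "1 < y" using p0 by auto
  with xy p0 have "ln (moment (1 / (y - 1))) / (1 / (y - 1)) \<le> ln (moment (1 / (x - 1))) / (1 / (x - 1))"
    by (intro ln_moment_div_mono) (auto intro: divide_left_mono)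
  then show "- x * ln (wnorm G (conj_exp x) (weight_root \<omega> x) \<mu>)
    \<le> - y * ln (wnorm G (conj_exp y) (weight_root \<omega> y) \<mu>)"
    unfolding neg_mult_ln_wnorm_eq_moment[OF \<open>1 < x\<close>] neg_mult_ln_wnorm_eq_moment[OF \<open>1 < y\<close>]
    by simp
qed

lemma neg_mult_ln_wnorm_tendsto_weighted_entropy:
  assumes "finite_entropy G \<mu>" "finite_log_moment G \<omega> \<mu>"
  shows "((\<lambda>p. - p * ln (wnorm G (conj_exp p) (weight_root \<omega> p) \<mu>))
    \<longlongrightarrow> weighted_entropy G \<omega> \<mu>) at_top"
proof -
  have "((\<lambda>p. - (ln (moment (1 / (p - 1))) / (1 / (p - 1)))) \<longlongrightarrow> weighted_entropy G \<omega> \<mu>) at_top"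
    unfolding weighted_entropy_def using summable_mass_ln_mass_weight[OF assms]
    by (intro tendsto_minus filterlim_compose[OF ln_moment_div_tendsto filterlim_one_div_pred_at_right_0])
  moreover have "\<forall>\<^sub>F p in at_top. - (ln (moment (1 / (p - 1))) / (1 / (p - 1)))
      = - p * ln (wnorm G (conj_exp p) (weight_root \<omega> p) \<mu>)"
    using eventually_gt_at_top[of 1] by eventually_elim (rule neg_mult_ln_wnorm_eq_moment[symmetric])
  ultimately show ?thesis
    by (rule Lim_transform_eventually)
qed

end

end

theorem theorem4p4:
  fixes G :: "('g, 'b) monoid_scheme" and \<omega> \<mu> :: "'g \<Rightarrow> real" and p0 q0 :: real
  assumes "group G"
    and "countable (carrier G)"
    and "is_weight G \<omega>"
    and "is_prob G \<mu>"
    and "1 < q0" and "q0 \<le> p0" and "1 / p0 + 1 / q0 = 1"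
    and "in_lq G q0 (weight_root \<omega> p0) \<mu>"
  shows "mono_on {p0..} (\<lambda>p. - p * ln (wnorm G (conj_exp p) (weight_root \<omega> p) \<mu>)) \<and>
         (finite_entropy G \<mu> \<longrightarrow> finite_log_moment G \<omega> \<mu> \<longrightarrow>
         ((\<lambda>p. - p * ln (wnorm G (conj_exp p) (weight_root \<omega> p) \<mu>))
            \<longlongrightarrow> weighted_entropy G \<omega> \<mu>) at_top)"
proof -
  have weight_pos: "\<And>s. s \<in> carrier G \<Longrightarrow> 0 < \<omega> s"
    using assms(3) unfolding is_weight_def by (meson less_le_trans)
  have mass: "\<And>s. s \<in> carrier G \<Longrightarrow> 0 \<le> \<mu> s" "(\<mu> has_sum 1) (carrier G)"
    using assms(4) unfolding is_prob_def by auto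
  have p0: "1 < p0" and "q0 = conj_exp p0"
    using assms(5-7) by (auto simp: conj_exp_def field_simps)
  then have "in_lq G (conj_exp p0) (weight_root \<omega> p0) \<mu>"
    using assms(8) by simp
  with mass weight_pos p0 show ?thesis
    using mono_on_neg_mult_ln_wnorm neg_mult_ln_wnorm_tendsto_weighted_entropy by blast
qed

end
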